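(* Let $kQ/I$ be a string algebra such that $Q$ has neither loops nor oriented cycles. Then there is a coloring $c$ of $Q$ such that $kQ/I_c$ is a gentle string algebra and $I_c\subseteq I$, so that the identity of $kQ$ induces an algebra epimorphism $kQ/I_c\to kQ/I$.
   Context: Paths are composed right to left ($ba$ means $a$ then $b$ when $ha=tb$). A string algebra is a finite-dimensional algebra $kQ/I$ with $I$ generated by paths, such that (a) each vertex is the head of at most 2 arrows and the tail of at most 2 arrows, and (b) for each arrow $b$ there is at most one arrow $a$ with $ta=hb$ and $ab\notin I$, and at most one arrow $c'$ with $hc'=tb$ and $bc'\notin I$. It is a gentle string algebra if moreover (c) for each arrow $b$ there is at most one arrow $a$ with $ta=hb$ and $ab\in I$ and at most one arrow $c'$ with $hc'=tb$ and $bc'\in I$, and (d) $I$ is generated by paths of length 2. A coloring of $Q$ is a map $c:Q_1\to S$ to a finite set such that each $c^{-1}(s)$ is the set of arrows of a single directed path; $I_c$ is the ideal generated by all $ba$ with $ha=tb$, $c(a)=c(b)$. *)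

theory Defs
  imports Main "HOL-Library.Sublist"
begin

text \<open>A (nonempty) path is a list of arrows in traversal order: the list [a, b] is
  the path "ba" (a then b), which requires h a = t b.\<close>

definition quiver :: "'v set \<Rightarrow> 'a set \<Rightarrow> ('a \<Rightarrow> 'v) \<Rightarrow> ('a \<Rightarrow> 'v) \<Rightarrow> bool" where
  "quiver Q0 Q1 h t \<longleftrightarrow> finite Q0 \<and> finite Q1 \<and> (\<forall>a\<in>Q1. h a \<in> Q0 \<and> t a \<in> Q0)"

definition valid_path :: "'a set \<Rightarrow> ('a \<Rightarrow> 'v) \<Rightarrow> ('a \<Rightarrow> 'v) \<Rightarrow> 'a list \<Rightarrow> bool" where
  "valid_path Q1 h t p \<longleftrightarrow> p \<noteq> [] \<and> set p \<subseteq> Q1 \<and>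
     (\<forall>i. Suc i < length p \<longrightarrow> h (p ! i) = t (p ! Suc i))"

definition no_oriented_cycles :: "'a set \<Rightarrow> ('a \<Rightarrow> 'v) \<Rightarrow> ('a \<Rightarrow> 'v) \<Rightarrow> bool" where
  "no_oriented_cycles Q1 h t \<longleftrightarrow> (\<forall>p. valid_path Q1 h t p \<longrightarrow> t (hd p) \<noteq> h (last p))"

text \<open>The ideal of kQ generated by a set R of paths is spanned by the paths that
  contain some element of R as a (contiguous) subpath; a path lies in it iff this holds.\<close>
definition in_ideal :: "'a list set \<Rightarrow> 'a list \<Rightarrow> bool" where
  "in_ideal R p \<longleftrightarrow> (\<exists>r\<in>R. sublist r p)"

definition paths_of :: "'a set \<Rightarrow> ('a \<Rightarrow> 'v) \<Rightarrow> ('a \<Rightarrow> 'v) \<Rightarrow> 'a list set \<Rightarrow> bool" where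
  "paths_of Q1 h t R \<longleftrightarrow> (\<forall>r\<in>R. valid_path Q1 h t r)"

text \<open>Finite-dimensionality of kQ/I: finitely many nonempty paths are not in I
  (trivial paths are finitely many since Q0 is finite).\<close>
definition fin_dim :: "'a set \<Rightarrow> ('a \<Rightarrow> 'v) \<Rightarrow> ('a \<Rightarrow> 'v) \<Rightarrow> 'a list set \<Rightarrow> bool" where
  "fin_dim Q1 h t R \<longleftrightarrow> finite {p. valid_path Q1 h t p \<and> \<not> in_ideal R p}"

definition string_algebra ::
  "'v set \<Rightarrow> 'a set \<Rightarrow> ('a \<Rightarrow> 'v) \<Rightarrow> ('a \<Rightarrow> 'v) \<Rightarrow> 'a list set \<Rightarrow> bool" where
  "string_algebra Q0 Q1 h t R \<longleftrightarrow>
     quiver Q0 Q1 h t \<and> paths_of Q1 h t R \<and> fin_dim Q1 h t R \<and>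
     (\<forall>v\<in>Q0. card {a\<in>Q1. h a = v} \<le> 2 \<and> card {a\<in>Q1. t a = v} \<le> 2) \<and>
     (\<forall>b\<in>Q1.
        (\<forall>a1\<in>Q1. \<forall>a2\<in>Q1. t a1 = h b \<and> \<not> in_ideal R [b, a1] \<and>
                             t a2 = h b \<and> \<not> in_ideal R [b, a2] \<longrightarrow> a1 = a2) \<and>
        (\<forall>c1\<in>Q1. \<forall>c2\<in>Q1. h c1 = t b \<and> \<not> in_ideal R [c1, b] \<and>
                             h c2 = t b \<and> \<not> in_ideal R [c2, b] \<longrightarrow> c1 = c2))"

definition gentle_string_algebra ::
  "'v set \<Rightarrow> 'a set \<Rightarrow> ('a \<Rightarrow> 'v) \<Rightarrow> ('a \<Rightarrow> 'v) \<Rightarrow> 'a list set \<Rightarrow> bool" where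
  "gentle_string_algebra Q0 Q1 h t R \<longleftrightarrow>
     string_algebra Q0 Q1 h t R \<and>
     (\<forall>b\<in>Q1.
        (\<forall>a1\<in>Q1. \<forall>a2\<in>Q1. t a1 = h b \<and> in_ideal R [b, a1] \<and>
                             t a2 = h b \<and> in_ideal R [b, a2] \<longrightarrow> a1 = a2) \<and>
        (\<forall>c1\<in>Q1. \<forall>c2\<in>Q1. h c1 = t b \<and> in_ideal R [c1, b] \<and>
                             h c2 = t b \<and> in_ideal R [c2, b] \<longrightarrow> c1 = c2)) \<and>
     (\<exists>R'. (\<forall>r\<in>R'. valid_path Q1 h t r \<and> length r = 2) \<and>
           (\<forall>p. valid_path Q1 h t p \<longrightarrow> (in_ideal R p \<longleftrightarrow> in_ideal R' p)))"

definition coloring :: "'a set \<Rightarrow> ('a \<Rightarrow> 'v) \<Rightarrow> ('a \<Rightarrow> 'v) \<Rightarrow> ('a \<Rightarrow> 's) \<Rightarrow> bool" where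
  "coloring Q1 h t c \<longleftrightarrow>
     (\<forall>s\<in>c ` Q1. \<exists>p. valid_path Q1 h t p \<and> set p = {a\<in>Q1. c a = s})"

definition color_rels :: "'a set \<Rightarrow> ('a \<Rightarrow> 'v) \<Rightarrow> ('a \<Rightarrow> 'v) \<Rightarrow> ('a \<Rightarrow> 's) \<Rightarrow> 'a list set" where
  "color_rels Q1 h t c = {[a, b] | a b. a \<in> Q1 \<and> b \<in> Q1 \<and> h a = t b \<and> c a = c b}"

end

theory Submission
  imports Defs
begin

text \<open>At each vertex v pair incoming arrows a with outgoing arrows b such that ba lies in I.
  At most two arrows enter and leave v, and by the string condition the pairs with ba not in I
  form a partial matching, so the remaining pairs contain a matching that uses every incoming
  arrow when two arrows leave v and every outgoing arrow when two arrows enter v. The chosen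
  pairs link the arrows into chains, which are directed paths since Q has no oriented cycles.
  Colouring each arrow by the first arrow of its chain gives a coloring whose length-two
  relations are exactly the chosen pairs: these lie in I, being a partial bijection they make
  kQ/I_c gentle, and the saturation of the matching makes it a string algebra.\<close>

lemma valid_path_singleton [simp]: "valid_path Q1 h t [a] \<longleftrightarrow> a \<in> Q1"
  by (simp add: valid_path_def)

lemma valid_path_Cons:
  "p \<noteq> [] \<Longrightarrow> valid_path Q1 h t (a # p) \<longleftrightarrow> a \<in> Q1 \<and> h a = t (hd p) \<and> valid_path Q1 h t p"
  by (cases p) (auto simp: valid_path_def nth_Cons split: nat.splits)

lemma valid_path_append:
  assumes "p \<noteq> []" "q \<noteq> []"
  shows "valid_path Q1 h t (p @ q) \<longleftrightarrow>
    valid_path Q1 h t p \<and> valid_path Q1 h t q \<and> h (last p) = t (hd q)"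
  using assms(1)
proof (induction p)
  case (Cons a p)
  then show ?case
    using assms(2) by (cases "p = []") (auto simp: valid_path_Cons)
qed simp

lemma distinct_if_valid_path:
  assumes "no_oriented_cycles Q1 h t" and "valid_path Q1 h t p"
  shows "distinct p"
  using assms(2)
proof (induction p)
  case (Cons a p)
  show ?case
  proof (cases "p = []")
    case False
    have "a \<notin> set p"
    proof
      assume "a \<in> set p"
      then obtain us vs where "p = us @ a # vs" by (meson split_list)
      with Cons.prems have "valid_path Q1 h t ((a # us) @ (a # vs))" by simp
      then have "valid_path Q1 h t (a # us)" and "h (last (a # us)) = t a"
        using valid_path_append[of "a # us" "a # vs" Q1 h t] by auto
      with assms(1) show False unfolding no_oriented_cycles_def by force
    qed
    with Cons False show ?thesis by (simp add: valid_path_Cons)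
  qed simp
qed simp

lemma finite_valid_paths:
  assumes "no_oriented_cycles Q1 h t" and "finite Q1"
  shows "finite {p. valid_path Q1 h t p}"
proof (rule finite_subset[OF _ finite_lists_length_le[OF assms(2), of "card Q1"]])
  show "{p. valid_path Q1 h t p} \<subseteq> {p. set p \<subseteq> Q1 \<and> length p \<le> card Q1}"
  proof clarify
    fix p assume p: "valid_path Q1 h t p"
    then have arrows: "set p \<subseteq> Q1" by (simp add: valid_path_def)
    have "length p = card (set p)"
      using distinct_if_valid_path[OF assms(1) p] by (simp add: distinct_card)
    also have "\<dots> \<le> card Q1" using arrows assms(2) by (simp add: card_mono)
    finally show "set p \<subseteq> Q1 \<and> length p \<le> card Q1" using arrows by simp
  qed
qed

lemma fin_dim_if_no_oriented_cycles:
  "no_oriented_cycles Q1 h t \<Longrightarrow> finite Q1 \<Longrightarrow> fin_dim Q1 h t R"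
  unfolding fin_dim_def by (rule finite_subset[OF _ finite_valid_paths]) auto

lemma sublist_pair_iff: "sublist [a, b] [x, y] \<longleftrightarrow> a = x \<and> b = y"
  by (auto simp: sublist_def append_eq_Cons_conv Cons_eq_append_conv)

lemma in_ideal_pairs_iff: "in_ideal {[a, b] | a b. (a, b) \<in> S} [x, y] \<longleftrightarrow> (x, y) \<in> S"
  unfolding in_ideal_def by (auto simp: sublist_pair_iff)

lemma in_ideal_trans: "(\<And>r. r \<in> C \<Longrightarrow> in_ideal R r) \<Longrightarrow> in_ideal C p \<Longrightarrow> in_ideal R p"
  unfolding in_ideal_def by (meson sublist_order.order_trans)

lemma card_le_2_eq_doubleton:
  "finite A \<Longrightarrow> card A \<le> 2 \<Longrightarrow> x \<in> A \<Longrightarrow> y \<in> A \<Longrightarrow> x \<noteq> y \<Longrightarrow> A = {x, y}"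
  by (metis card_2_iff card_seteq empty_subsetI insert_subset)

lemma two_le_card: "finite A \<Longrightarrow> x \<in> A \<Longrightarrow> y \<in> A \<Longrightarrow> x \<noteq> y \<Longrightarrow> 2 \<le> card A"
  by (metis card_2_iff card_mono empty_subsetI insert_subset)

lemma two_distinct_if_two_le_card:
  assumes "2 \<le> card A" obtains x y where "x \<in> A" "y \<in> A" "x \<noteq> y"
proof -
  have "finite A" using assms card.infinite by fastforce
  with assms show ?thesis using card_le_Suc0_iff_eq that by fastforce
qed

lemma card_le_2_unique_failure:
  assumes "finite A" "card A \<le> 2" and witness: "2 \<le> card A \<Longrightarrow> \<exists>x\<in>A. Q x"
    and "x1 \<in> A" "x2 \<in> A" "\<not> Q x1" "\<not> Q x2"
  shows "x1 = x2"
proof (rule ccontr)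
  assume "x1 \<noteq> x2"
  then have "A = {x1, x2}" and "2 \<le> card A"
    using card_le_2_eq_doubleton[OF assms(1,2,4,5)] two_le_card[OF assms(1,4,5)] by simp_all
  with witness assms(6,7) show False by blast
qed

definition saturating_matching :: "'a set \<Rightarrow> 'b set \<Rightarrow> ('a \<Rightarrow> 'b \<Rightarrow> bool) \<Rightarrow> ('a \<times> 'b) set \<Rightarrow> bool"
  where "saturating_matching A B P M \<longleftrightarrow>
    M \<subseteq> {(a, b). a \<in> A \<and> b \<in> B \<and> P a b} \<and> single_valued M \<and> single_valued (M\<inverse>) \<and>
    (2 \<le> card B \<longrightarrow> A \<subseteq> Domain M) \<and> (2 \<le> card A \<longrightarrow> B \<subseteq> Range M)"

lemma saturating_matching_converse:
  "saturating_matching A B P M \<Longrightarrow> saturating_matching B A (\<lambda>b a. P a b) (M\<inverse>)"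
  unfolding saturating_matching_def by auto

lemma saturating_matching_onto_le_1:
  assumes "finite B" "card B \<le> 1"
    and bad_right: "\<And>a a' b. a \<in> A \<Longrightarrow> a' \<in> A \<Longrightarrow> b \<in> B \<Longrightarrow> \<not> P a b \<Longrightarrow> \<not> P a' b \<Longrightarrow> a = a'"
  shows "\<exists>M. saturating_matching A B P M"
proof (cases "2 \<le> card A \<and> B \<noteq> {}")
  case True
  then obtain b where "b \<in> B" by blast
  then have B: "B = {b}" using assms(1,2) card_le_Suc0_iff_eq[OF assms(1)] by auto
  obtain a1 a2 where "a1 \<in> A" "a2 \<in> A" "a1 \<noteq> a2"
    using True two_distinct_if_two_le_card by blast
  then obtain a where "a \<in> A" "P a b" using bad_right[of a1 a2 b] B by auto
  then have "saturating_matching A B P {(a, b)}"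
    using B by (auto simp: saturating_matching_def single_valued_def)
  then show ?thesis ..
next
  case False
  then have "saturating_matching A B P {}"
    using assms(2) by (auto simp: saturating_matching_def single_valued_def)
  then show ?thesis ..
qed

lemma saturating_matching_exists:
  assumes A: "finite A" "card A \<le> 2" and B: "finite B" "card B \<le> 2"
    and bad_left: "\<And>a b b'. a \<in> A \<Longrightarrow> b \<in> B \<Longrightarrow> b' \<in> B \<Longrightarrow> \<not> P a b \<Longrightarrow> \<not> P a b' \<Longrightarrow> b = b'"
    and bad_right: "\<And>a a' b. a \<in> A \<Longrightarrow> a' \<in> A \<Longrightarrow> b \<in> B \<Longrightarrow> \<not> P a b \<Longrightarrow> \<not> P a' b \<Longrightarrow> a = a'"
  shows "\<exists>M. saturating_matching A B P M"
proof -
  consider "card B \<le> 1" | "card A \<le> 1" | "card A = 2" "card B = 2"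
    using A(2) B(2) by linarith
  then show ?thesis
  proof cases
    case 1
    then show ?thesis using saturating_matching_onto_le_1[OF B(1) 1, of A P] bad_right by blast
  next
    case 2
    obtain M where "saturating_matching B A (\<lambda>b a. P a b) M"
      using saturating_matching_onto_le_1[OF A(1) 2, of B "\<lambda>b a. P a b"] bad_left by blast
    then show ?thesis using saturating_matching_converse by fastforce
  next
    case 3
    then obtain a1 a2 b1 b2 where A2: "A = {a1, a2}" "a1 \<noteq> a2" and B2: "B = {b1, b2}" "b1 \<noteq> b2"
      by (meson card_2_iff)
    have matching: ?thesis if "A = {x1, x2}" "x1 \<noteq> x2" "P x1 b1" "P x2 b2" for x1 x2
    proof
      show "saturating_matching A B P {(x1, b1), (x2, b2)}"
        using that B2 by (auto simp: saturating_matching_def single_valued_def)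
    qed
    show ?thesis
    proof (cases "P a1 b1 \<and> P a2 b2")
      case False
      have "a1 \<in> A" "a2 \<in> A" "b1 \<in> B" "b2 \<in> B" using A2 B2 by simp_all
      with False have "P a2 b1 \<and> P a1 b2"
        using bad_left[of a1 b1 b2] bad_right[of a1 a2 b1] bad_left[of a2 b2 b1]
          bad_right[of a1 a2 b2] A2(2) B2(2) by blast
      then show ?thesis using matching[of a2 a1] A2 by (simp add: insert_commute)
    qed (use matching A2 in blast)
  qed
qed

lemma saturated_pairing_exists:
  assumes "string_algebra Q0 Q1 h t R"
  obtains S where "S \<subseteq> {(a, b). a \<in> Q1 \<and> b \<in> Q1 \<and> h a = t b \<and> in_ideal R [a, b]}"
    and "single_valued S" and "single_valued (S\<inverse>)"
    and "\<And>a. a \<in> Q1 \<Longrightarrow> 2 \<le> card {b \<in> Q1. t b = h a} \<Longrightarrow> a \<in> Domain S"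
    and "\<And>b. b \<in> Q1 \<Longrightarrow> 2 \<le> card {a \<in> Q1. h a = t b} \<Longrightarrow> b \<in> Range S"
proof -
  define In where "In v = {a \<in> Q1. h a = v}" for v
  define Out where "Out v = {b \<in> Q1. t b = v}" for v
  have fin: "finite Q1" and vertices: "\<And>a. a \<in> Q1 \<Longrightarrow> h a \<in> Q0 \<and> t a \<in> Q0"
    using assms by (auto simp: string_algebra_def quiver_def)
  have "\<exists>M. saturating_matching (In v) (Out v) (\<lambda>a b. in_ideal R [a, b]) M" if "v \<in> Q0" for v
  proof (rule saturating_matching_exists)
    show "finite (In v)" "finite (Out v)" using fin by (simp_all add: In_def Out_def)
    show "card (In v) \<le> 2" "card (Out v) \<le> 2"
      using assms that by (simp_all add: string_algebra_def In_def Out_def)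
    show "b = b'" if "a \<in> In v" "b \<in> Out v" "b' \<in> Out v"
      "\<not> in_ideal R [a, b]" "\<not> in_ideal R [a, b']" for a b b'
      using assms that unfolding string_algebra_def In_def Out_def by auto
    show "a = a'" if "a \<in> In v" "a' \<in> In v" "b \<in> Out v"
      "\<not> in_ideal R [a, b]" "\<not> in_ideal R [a', b]" for a a' b
      using assms that unfolding string_algebra_def In_def Out_def by auto
  qed
  then obtain M
    where "\<And>v. v \<in> Q0 \<Longrightarrow> saturating_matching (In v) (Out v) (\<lambda>a b. in_ideal R [a, b]) (M v)"
    by metis
  then have M: "M v \<subseteq> {(a, b). a \<in> In v \<and> b \<in> Out v \<and> in_ideal R [a, b]}"
    "single_valued (M v)" "single_valued ((M v)\<inverse>)"
    "2 \<le> card (Out v) \<Longrightarrow> In v \<subseteq> Domain (M v)" "2 \<le> card (In v) \<Longrightarrow> Out v \<subseteq> Range (M v)"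
    if "v \<in> Q0" for v
    using that unfolding saturating_matching_def by blast+
  define S where "S = (\<Union>v\<in>Q0. M v)"
  have head: "(a, b) \<in> S \<longleftrightarrow> h a \<in> Q0 \<and> (a, b) \<in> M (h a)" for a b
    using M(1) unfolding S_def In_def by blast
  have tail: "(a, b) \<in> S \<longleftrightarrow> t b \<in> Q0 \<and> (a, b) \<in> M (t b)" for a b
    using M(1) unfolding S_def Out_def by blast
  show ?thesis
  proof
    show "S \<subseteq> {(a, b). a \<in> Q1 \<and> b \<in> Q1 \<and> h a = t b \<and> in_ideal R [a, b]}"
    proof clarify
      fix a b assume "(a, b) \<in> S"
      then have "(a, b) \<in> M (h a)" "h a \<in> Q0" using head by simp_all
      then show "a \<in> Q1 \<and> b \<in> Q1 \<and> h a = t b \<and> in_ideal R [a, b]"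
        using M(1)[of "h a"] unfolding In_def Out_def by auto
    qed
    show "single_valued S"
      using M(2) by (auto simp: single_valued_def head)
    show "single_valued (S\<inverse>)"
      using M(3) by (auto simp: single_valued_def tail)
    show "a \<in> Domain S" if "a \<in> Q1" "2 \<le> card {b \<in> Q1. t b = h a}" for a
    proof -
      have "a \<in> Domain (M (h a))"
        using M(4)[of "h a"] vertices[OF that(1)] that unfolding In_def Out_def by blast
      then show ?thesis using head vertices[OF that(1)] by blast
    qed
    show "b \<in> Range S" if "b \<in> Q1" "2 \<le> card {a \<in> Q1. h a = t b}" for b
    proof -
      have "b \<in> Range (M (t b))"
        using M(5)[of "t b"] vertices[OF that(1)] that unfolding In_def Out_def by blast
      then show ?thesis using tail vertices[OF that(1)] by blast
    qed
  qed
qed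

text \<open>The first element of the S-chain through a; only determined when S is well-founded
  and its converse single-valued, which all lemmas about it assume.\<close>
definition chain_root :: "('a \<times> 'a) set \<Rightarrow> 'a \<Rightarrow> 'a" where
  "chain_root S a = (THE r. (r, a) \<in> S\<^sup>* \<and> r \<notin> Range S)"

lemma chain_root_unique:
  assumes "single_valued (S\<inverse>)"
    and "(r, a) \<in> S\<^sup>*" "r \<notin> Range S" and "(r', a) \<in> S\<^sup>*" "r' \<notin> Range S"
  shows "r = r'"
proof -
  have "(a, r) \<in> (S\<inverse>)\<^sup>*" "(a, r') \<in> (S\<inverse>)\<^sup>*"
    using assms(2,4) by (simp_all add: rtrancl_converse)
  then have "(r', r) \<in> S\<^sup>* \<or> (r, r') \<in> S\<^sup>*"
    using single_valued_confluent[OF assms(1)] by (auto simp: rtrancl_converse)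
  with assms(3,5) show ?thesis by (auto elim: rtranclE)
qed

lemma chain_root_exists:
  assumes "wf S"
  shows "\<exists>r. (r, a) \<in> S\<^sup>* \<and> r \<notin> Range S"
  using assms
proof (induction a rule: wf_induct_rule)
  case (less a)
  show ?case
  proof (cases "a \<in> Range S")
    case True
    then obtain x where "(x, a) \<in> S" by blast
    with less.IH obtain r where "(r, x) \<in> S\<^sup>*" "r \<notin> Range S" by blast
    with \<open>(x, a) \<in> S\<close> show ?thesis by (meson rtrancl.rtrancl_into_rtrancl)
  qed blast
qed

lemma chain_root_eqI:
  "single_valued (S\<inverse>) \<Longrightarrow> (r, a) \<in> S\<^sup>* \<Longrightarrow> r \<notin> Range S \<Longrightarrow> chain_root S a = r"
  unfolding chain_root_def by (rule the_equality) (auto intro: chain_root_unique)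

lemma chain_root:
  assumes "wf S" "single_valued (S\<inverse>)"
  shows "(chain_root S a, a) \<in> S\<^sup>*" and "chain_root S a \<notin> Range S"
proof -
  obtain r where "(r, a) \<in> S\<^sup>*" "r \<notin> Range S" using chain_root_exists[OF assms(1)] by blast
  with chain_root_eqI[OF assms(2)] show "(chain_root S a, a) \<in> S\<^sup>*" "chain_root S a \<notin> Range S"
    by simp_all
qed

lemma chain_root_step:
  assumes "wf S" "single_valued (S\<inverse>)" and "(a, b) \<in> S"
  shows "chain_root S b = chain_root S a"
  using chain_root[OF assms(1,2), of a] assms
  by (intro chain_root_eqI) (auto intro: rtrancl_into_rtrancl)

locale arrow_pairing =
  fixes Q1 :: "'a set" and h t :: "'a \<Rightarrow> 'v" and S :: "('a \<times> 'a) set"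
  assumes finite_arrows: "finite Q1"
    and no_cycles: "no_oriented_cycles Q1 h t"
    and pairs_composable: "S \<subseteq> {(a, b). a \<in> Q1 \<and> b \<in> Q1 \<and> h a = t b}"
    and single_valued_pairs: "single_valued S"
    and single_valued_converse_pairs: "single_valued (S\<inverse>)"
begin

lemma pair_composableD: "(a, b) \<in> S \<Longrightarrow> a \<in> Q1 \<and> b \<in> Q1 \<and> h a = t b"
  using pairs_composable by blast

lemma rtrancl_valid_path:
  "(a, b) \<in> S\<^sup>* \<Longrightarrow> a \<in> Q1 \<Longrightarrow> \<exists>p. valid_path Q1 h t p \<and> hd p = a \<and> last p = b"
proof (induction rule: converse_rtrancl_induct)
  case base
  then show ?case by (intro exI[of _ "[b]"]) simp
next
  case (step a x)
  then obtain p where "valid_path Q1 h t p" "hd p = x" "last p = b"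
    using pair_composableD by blast
  moreover have "p \<noteq> []" using \<open>valid_path Q1 h t p\<close> by (simp add: valid_path_def)
  ultimately show ?case
    using pair_composableD[OF step(1)] by (intro exI[of _ "a # p"]) (simp add: valid_path_Cons)
qed

lemma tail_neq_head: "(a, b) \<in> S\<^sup>* \<Longrightarrow> a \<in> Q1 \<Longrightarrow> t a \<noteq> h b"
  using rtrancl_valid_path no_cycles unfolding no_oriented_cycles_def by blast

lemma acyclic_pairs: "acyclic S"
  unfolding acyclic_def
proof (intro allI notI)
  fix a assume "(a, a) \<in> S\<^sup>+"
  then obtain b where "(a, b) \<in> S" "(b, a) \<in> S\<^sup>*" by (meson tranclD)
  then show False using tail_neq_head[of b a] pair_composableD[of a b] by auto
qed

lemma finite_pairs: "finite S"
  by (rule finite_subset[OF _ finite_cartesian_product[OF finite_arrows finite_arrows]])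
    (use pairs_composable in auto)

lemma wf_pairs: "wf S"
  using finite_acyclic_wf[OF finite_pairs acyclic_pairs] .

lemma chain_root_arrow:
  assumes "a \<in> Q1" shows "chain_root S a \<in> Q1"
  using chain_root(1)[OF wf_pairs single_valued_converse_pairs, of a]
proof (cases rule: converse_rtranclE)
  case (step x)
  then show ?thesis using pair_composableD by blast
qed (use assms in simp)

lemma chain_valid_path:
  "a \<in> Q1 \<Longrightarrow> \<exists>p. valid_path Q1 h t p \<and> hd p = a \<and> set p = {b. (a, b) \<in> S\<^sup>*}"
proof (induction a rule: wf_induct_rule[OF finite_acyclic_wf_converse[OF finite_pairs acyclic_pairs]])
  case (1 a)
  show ?case
  proof (cases "a \<in> Domain S")
    case True
    then obtain x where x: "(a, x) \<in> S" by blast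
    with 1 pair_composableD obtain p where p: "valid_path Q1 h t p" "hd p = x" "set p = {b. (x, b) \<in> S\<^sup>*}"
      by blast
    have "{b. (a, b) \<in> S\<^sup>*} = insert a {b. (x, b) \<in> S\<^sup>*}"
      using x single_valued_pairs
      by (auto elim: converse_rtranclE intro: converse_rtrancl_into_rtrancl dest: single_valuedD)
    moreover have "p \<noteq> []" using p(1) by (simp add: valid_path_def)
    ultimately show ?thesis
      using p pair_composableD[OF x] by (intro exI[of _ "a # p"]) (simp add: valid_path_Cons)
  next
    case False
    then have "{b. (a, b) \<in> S\<^sup>*} = {a}" by (auto elim: converse_rtranclE)
    then show ?thesis using 1(2) by (intro exI[of _ "[a]"]) simp
  qed
qed

text \<open>Two composable arrows in the same chain are adjacent in it: anything in between
  would close an oriented cycle.\<close>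
lemma pair_if_same_chain_root:
  assumes "a \<in> Q1" "b \<in> Q1" "h a = t b" and "chain_root S a = chain_root S b"
  shows "(a, b) \<in> S"
proof -
  have "(a, b) \<in> S\<^sup>* \<or> (b, a) \<in> S\<^sup>*"
    using single_valued_confluent[OF single_valued_pairs] chain_root(1)[OF wf_pairs single_valued_converse_pairs]
      assms(4) by metis
  moreover have "(b, a) \<notin> S\<^sup>*" using tail_neq_head assms by metis
  ultimately have "(a, b) \<in> S\<^sup>*" by blast
  moreover have "a \<noteq> b" using tail_neq_head[of a a] assms by auto
  ultimately obtain x where x: "(a, x) \<in> S" "(x, b) \<in> S\<^sup>*"
    by (auto elim: converse_rtranclE)
  show ?thesis
  proof (cases "x = b")
    case False
    then obtain y where "(x, y) \<in> S\<^sup>*" "(y, b) \<in> S" using x(2) by (auto elim: rtranclE)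
    then have "t x = h y" using pair_composableD[OF x(1)] assms(3) by (auto dest: pair_composableD)
    then show ?thesis using tail_neq_head[OF \<open>(x, y) \<in> S\<^sup>*\<close>] pair_composableD[OF x(1)] by blast
  qed (use x in simp)
qed

lemma chain_of_root:
  assumes "r \<in> Q1" "r \<notin> Range S"
  shows "{b \<in> Q1. chain_root S b = r} = {b. (r, b) \<in> S\<^sup>*}"
proof (intro set_eqI iffI)
  fix b assume "b \<in> {b \<in> Q1. chain_root S b = r}"
  then show "b \<in> {b. (r, b) \<in> S\<^sup>*}" using chain_root(1)[OF wf_pairs single_valued_converse_pairs] by auto
next
  fix b assume "b \<in> {b. (r, b) \<in> S\<^sup>*}"
  then have "(r, b) \<in> S\<^sup>*" by simp
  moreover from this have "b \<in> Q1" using assms(1) by (auto elim: rtranclE dest: pair_composableD)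
  ultimately show "b \<in> {b \<in> Q1. chain_root S b = r}"
    using chain_root_eqI[OF single_valued_converse_pairs _ assms(2)] by simp
qed

lemma coloring_with_pairs:
  "\<exists>c :: 'a \<Rightarrow> nat. coloring Q1 h t c \<and> color_rels Q1 h t c = {[a, b] | a b. (a, b) \<in> S}"
proof -
  obtain f :: "'a \<Rightarrow> nat" where f: "inj_on f Q1"
    using finite_imp_inj_to_nat_seg[OF finite_arrows] by blast
  define c where "c a = f (chain_root S a)" for a
  have same_color: "c a = c b \<longleftrightarrow> chain_root S a = chain_root S b" if "a \<in> Q1" "b \<in> Q1" for a b
    unfolding c_def using inj_on_eq_iff[OF f] chain_root_arrow that by blast
  have "coloring Q1 h t c"
    unfolding coloring_def
  proof
    fix s assume "s \<in> c ` Q1"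
    then obtain a where a: "a \<in> Q1" "s = c a" by blast
    let ?r = "chain_root S a"
    have "{b \<in> Q1. c b = s} = {b \<in> Q1. chain_root S b = ?r}"
      using a same_color by auto
    also have "\<dots> = {b. (?r, b) \<in> S\<^sup>*}"
      using chain_of_root chain_root(2)[OF wf_pairs single_valued_converse_pairs] chain_root_arrow a(1) by blast
    finally show "\<exists>p. valid_path Q1 h t p \<and> set p = {b \<in> Q1. c b = s}"
      using chain_valid_path[OF chain_root_arrow[OF a(1)]] by metis
  qed
  moreover have "color_rels Q1 h t c = {[a, b] | a b. (a, b) \<in> S}"
  proof (intro set_eqI iffI)
    fix p assume "p \<in> color_rels Q1 h t c"
    then obtain a b where "p = [a, b]" "a \<in> Q1" "b \<in> Q1" "h a = t b" "c a = c b"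
      unfolding color_rels_def by blast
    then show "p \<in> {[a, b] | a b. (a, b) \<in> S}"
      using pair_if_same_chain_root same_color by blast
  next
    fix p assume "p \<in> {[a, b] | a b. (a, b) \<in> S}"
    then obtain a b where "p = [a, b]" "(a, b) \<in> S" by blast
    then show "p \<in> color_rels Q1 h t c"
      unfolding color_rels_def c_def
      using pair_composableD chain_root_step[OF wf_pairs single_valued_converse_pairs] by fastforce
  qed
  ultimately show ?thesis by blast
qed

end

lemma gentle_string_algebra_pairs:
  assumes quiver: "quiver Q0 Q1 h t"
    and degree: "\<forall>v\<in>Q0. card {a \<in> Q1. h a = v} \<le> 2 \<and> card {a \<in> Q1. t a = v} \<le> 2"
    and acyclic: "no_oriented_cycles Q1 h t"
    and composable: "S \<subseteq> {(a, b). a \<in> Q1 \<and> b \<in> Q1 \<and> h a = t b}"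
    and "single_valued S" "single_valued (S\<inverse>)"
    and saturated_succ: "\<And>a. a \<in> Q1 \<Longrightarrow> 2 \<le> card {b \<in> Q1. t b = h a} \<Longrightarrow> a \<in> Domain S"
    and saturated_pred: "\<And>b. b \<in> Q1 \<Longrightarrow> 2 \<le> card {a \<in> Q1. h a = t b} \<Longrightarrow> b \<in> Range S"
  shows "gentle_string_algebra Q0 Q1 h t {[a, b] | a b. (a, b) \<in> S}"
proof -
  let ?C = "{[a, b] | a b. (a, b) \<in> S}"
  have fin: "finite Q1" and vertices: "\<And>a. a \<in> Q1 \<Longrightarrow> h a \<in> Q0 \<and> t a \<in> Q0"
    using quiver by (auto simp: quiver_def)
  have succ_unpaired_unique: "a1 = a2"
    if "b \<in> Q1" "a1 \<in> Q1" "a2 \<in> Q1" "t a1 = h b" "t a2 = h b" "(b, a1) \<notin> S" "(b, a2) \<notin> S"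
    for b a1 a2
  proof (rule card_le_2_unique_failure[where Q = "\<lambda>a. (b, a) \<in> S"])
    show "\<exists>x\<in>{a \<in> Q1. t a = h b}. (b, x) \<in> S" if two: "2 \<le> card {a \<in> Q1. t a = h b}"
    proof -
      obtain x where "(b, x) \<in> S" using saturated_succ[OF \<open>b \<in> Q1\<close> two] by blast
      moreover from this have "x \<in> Q1" "h b = t x" using composable by auto
      ultimately show ?thesis by auto
    qed
  qed (use that fin degree vertices[of b] in auto)
  have pred_unpaired_unique: "a1 = a2"
    if "b \<in> Q1" "a1 \<in> Q1" "a2 \<in> Q1" "h a1 = t b" "h a2 = t b" "(a1, b) \<notin> S" "(a2, b) \<notin> S"
    for b a1 a2
  proof (rule card_le_2_unique_failure[where Q = "\<lambda>a. (a, b) \<in> S"])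
    show "\<exists>x\<in>{a \<in> Q1. h a = t b}. (x, b) \<in> S" if two: "2 \<le> card {a \<in> Q1. h a = t b}"
    proof -
      obtain x where "(x, b) \<in> S" using saturated_pred[OF \<open>b \<in> Q1\<close> two] by blast
      moreover from this have "x \<in> Q1" "h x = t b" using composable by auto
      ultimately show ?thesis by auto
    qed
  qed (use that fin degree vertices[of b] in auto)
  have paths: "paths_of Q1 h t ?C"
    using composable by (auto simp: paths_of_def valid_path_Cons)
  have "string_algebra Q0 Q1 h t ?C"
    unfolding string_algebra_def in_ideal_pairs_iff
    using quiver paths fin_dim_if_no_oriented_cycles[OF acyclic fin] degree
      succ_unpaired_unique pred_unpaired_unique by blast
  moreover have "\<forall>r\<in>?C. valid_path Q1 h t r \<and> length r = 2"
    using paths by (auto simp: paths_of_def)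
  ultimately show ?thesis
    unfolding gentle_string_algebra_def in_ideal_pairs_iff
    using \<open>single_valued S\<close> \<open>single_valued (S\<inverse>)\<close> by (blast dest: single_valuedD)
qed

theorem mainTheorem3:
  fixes Q0 :: "'v set" and Q1 :: "'a set" and h t :: "'a \<Rightarrow> 'v" and R :: "'a list set"
  assumes "string_algebra Q0 Q1 h t R"
    and "no_oriented_cycles Q1 h t"
  shows "\<exists>c :: 'a \<Rightarrow> nat.
           coloring Q1 h t c \<and>
           gentle_string_algebra Q0 Q1 h t (color_rels Q1 h t c) \<and>
           (\<forall>p. valid_path Q1 h t p \<longrightarrow> in_ideal (color_rels Q1 h t c) p \<longrightarrow> in_ideal R p)"
proof -
  obtain S where S_ideal: "S \<subseteq> {(a, b). a \<in> Q1 \<and> b \<in> Q1 \<and> h a = t b \<and> in_ideal R [a, b]}"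
    and S: "single_valued S" "single_valued (S\<inverse>)"
      "\<And>a. a \<in> Q1 \<Longrightarrow> 2 \<le> card {b \<in> Q1. t b = h a} \<Longrightarrow> a \<in> Domain S"
      "\<And>b. b \<in> Q1 \<Longrightarrow> 2 \<le> card {a \<in> Q1. h a = t b} \<Longrightarrow> b \<in> Range S"
    using saturated_pairing_exists[OF assms(1)] by blast
  have composable: "S \<subseteq> {(a, b). a \<in> Q1 \<and> b \<in> Q1 \<and> h a = t b}" using S_ideal by blast
  have quiver: "quiver Q0 Q1 h t"
    and degree: "\<forall>v\<in>Q0. card {a \<in> Q1. h a = v} \<le> 2 \<and> card {a \<in> Q1. t a = v} \<le> 2"
    using assms(1) by (simp_all add: string_algebra_def)
  interpret arrow_pairing Q1 h t S
    using quiver assms(2) composable S(1,2) by unfold_locales (simp_all add: quiver_def)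
  obtain c :: "'a \<Rightarrow> nat" where "coloring Q1 h t c"
    and rels: "color_rels Q1 h t c = {[a, b] | a b. (a, b) \<in> S}"
    using coloring_with_pairs by blast
  moreover have "gentle_string_algebra Q0 Q1 h t (color_rels Q1 h t c)"
    unfolding rels using gentle_string_algebra_pairs[OF quiver degree assms(2) composable S] .
  moreover have "in_ideal (color_rels Q1 h t c) p \<Longrightarrow> in_ideal R p" for p
    unfolding rels by (erule in_ideal_trans[rotated]) (use S_ideal in blast)
  ultimately show ?thesis by blast
qed

end
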